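(* For every integer $k$ and every integer $n\geq 0$, \[ b_{n}^{(k)}(x)=\sum_{l=0}^{n}\binom{n}{l}\left(\sum_{p=1}^{l+1}\frac{(-1)^{p+l+1}}{p^{k}}\,p!\,\frac{S_{2}(l+1,p)}{l+1}\right)b_{n-l}(x). \]
   Context: For $k\in\mathbb{Z}$, the polylogarithm is $Li_k(x)=\sum_{n=1}^{\infty}\frac{x^n}{n^k}$. The poly-Bernoulli polynomials of the second kind $b_n^{(k)}(x)$ are defined by the generating function \[ \frac{Li_{k}(1-e^{-t})}{\log(1+t)}(1+t)^{x}=\sum_{n=0}^{\infty}b_{n}^{(k)}(x)\frac{t^{n}}{n!}. \] The Bernoulli polynomials of the second kind $b_n(x)$ are defined by $\frac{t}{\log(1+t)}(1+t)^x=\sum_{n=0}^{\infty}b_n(x)\frac{t^n}{n!}$. $S_2(n,l)$ denotes the Stirling numbers of the second kind, defined by $x^n=\sum_{l=0}^{n}S_2(n,l)(x)_l$, where $(x)_l=x(x-1)\cdots(x-l+1)$. *)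

theory Defs
  imports "HOL-Computational_Algebra.Formal_Power_Series" "HOL-Combinatorics.Stirling"
begin

definition polylog_fps :: "int \<Rightarrow> real fps" where
  "polylog_fps k = Abs_fps (\<lambda>m. if m = 0 then 0 else 1 / (real m powi k))"

text \<open>Generating function Li_k(1 - e^(-t)) / log(1+t) * (1+t)^x, as a formal power series in t.
  fps_ln 1 is log(1+t), fps_binomial x is (1+t)^x, fps_exp (-1) is e^(-t).\<close>
definition poly_bernoulli2 :: "int \<Rightarrow> nat \<Rightarrow> real \<Rightarrow> real" where
  "poly_bernoulli2 k n x =
     fact n * fps_nth ((polylog_fps k oo (1 - fps_exp (-1))) / fps_ln 1 * fps_binomial x) n"

definition bernoulli2 :: "nat \<Rightarrow> real \<Rightarrow> real" where
  "bernoulli2 n x = fact n * fps_nth (fps_X / fps_ln 1 * fps_binomial x) n"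

end

theory Submission
  imports Defs
begin

text \<open>The generating function factors as \<open>(Li\<^sub>k(1 - e\<^sup>-\<^sup>t) / t) \<cdot> (t / log(1+t) \<cdot> (1+t)\<^sup>x)\<close>,
  so \<open>b\<^sub>n\<^sup>(\<^sup>k\<^sup>)(x)\<close> is the binomial convolution of the exponential coefficients of the two
  factors, the second of which are the \<open>b\<^sub>m(x)\<close>. The coefficients of \<open>Li\<^sub>k(1 - e\<^sup>-\<^sup>t)\<close> follow
  from \<open>(1 - e\<^sup>-\<^sup>t)\<^sup>p = p! \<Sum>\<^sub>m (-1)\<^sup>p\<^sup>+\<^sup>m S\<^sub>2(m,p) t\<^sup>m / m!\<close>: differentiating gives
  \<open>((1 - e\<^sup>-\<^sup>t)\<^sup>p)' = p ((1 - e\<^sup>-\<^sup>t)\<^sup>p\<^sup>-\<^sup>1 - (1 - e\<^sup>-\<^sup>t)\<^sup>p)\<close>, which on coefficients is the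
  recurrence of the Stirling numbers.\<close>

lemma fps_deriv_one_minus_exp_neg:
  "fps_deriv (1 - fps_exp (-1 :: 'a :: field_char_0)) = 1 - (1 - fps_exp (-1))"
proof -
  have "fps_const (-1 :: 'a) = -1" by (simp add: fps_eq_iff)
  thus ?thesis by simp
qed

lemma fps_nth_one_minus_exp_neg_power:
  "fps_nth ((1 - fps_exp (-1 :: 'a :: field_char_0)) ^ p) m
     = (-1) ^ (p + m) * fact p * of_nat (Stirling m p) / fact m"
proof (induction m arbitrary: p)
  case 0
  then show ?case by (cases p) auto
next
  case (Suc m)
  show ?case
  proof (cases p)
    case 0
    then show ?thesis by simp
  next
    case (Suc q)
    let ?g = "1 - fps_exp (-1 :: 'a)"
    have "fps_deriv (?g ^ Suc q) = of_nat (Suc q) * ?g ^ q * (1 - ?g)"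
      by (simp only: fps_deriv_power' fps_deriv_one_minus_exp_neg diff_Suc_1 mult_ac)
    also have "\<dots> = of_nat (Suc q) * (?g ^ q - ?g ^ Suc q)"
      by (simp add: algebra_simps)
    finally have "of_nat (Suc m) * fps_nth (?g ^ Suc q) (Suc m)
        = of_nat (Suc q) * (fps_nth (?g ^ q) m - fps_nth (?g ^ Suc q) m)"
      by (metis fps_deriv_nth fps_mult_left_const_nth fps_of_nat fps_sub_nth plus_1_eq_Suc add.commute)
    hence "fps_nth (?g ^ Suc q) (Suc m)
        = of_nat (Suc q) * (fps_nth (?g ^ q) m - fps_nth (?g ^ Suc q) m) / of_nat (Suc m)"
      using of_nat_neq_0 by (metis eq_divide_imp mult.commute)
    also have "\<dots> = (-1) ^ (Suc q + Suc m) * fact (Suc q) * of_nat (Stirling (Suc m) (Suc q))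
                      / fact (Suc m)"
      unfolding Suc.IH by (simp add: field_simps)
    finally show ?thesis using Suc by simp
  qed
qed

lemma fps_nth_polylog_compose_one_minus_exp_neg:
  "fps_nth (polylog_fps k oo (1 - fps_exp (-1))) m
     = (\<Sum>p = 1..m. (-1) ^ (p + m) / (real p powi k) * fact p * real (Stirling m p) / fact m)"
proof -
  have "fps_nth (polylog_fps k oo (1 - fps_exp (-1))) m
      = (\<Sum>p = 0..m. fps_nth (polylog_fps k) p * fps_nth ((1 - fps_exp (-1)) ^ p) m)"
    by (simp add: fps_compose_nth)
  also have "\<dots> = (\<Sum>p = 1..m. fps_nth (polylog_fps k) p * fps_nth ((1 - fps_exp (-1)) ^ p) m)"
    by (rule sum.mono_neutral_right) (auto simp: polylog_fps_def)
  also have "\<dots> = (\<Sum>p = 1..m. (-1) ^ (p + m) / (real p powi k) * fact p * real (Stirling m p) / fact m)"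
    by (rule sum.cong) (auto simp: polylog_fps_def fps_nth_one_minus_exp_neg_power)
  finally show ?thesis .
qed

lemma fact_fps_mult_nth:
  fixes f g :: "'a :: field_char_0 fps"
  shows "fact n * fps_nth (f * g) n
     = (\<Sum>l = 0..n. of_nat (n choose l) * (fact l * fps_nth f l) * (fact (n - l) * fps_nth g (n - l)))"
  unfolding fps_mult_nth sum_distrib_left
proof (rule sum.cong[OF refl])
  fix l assume "l \<in> {0..n}"
  then have "of_nat (n choose l) = (fact n / (fact l * fact (n - l)) :: 'a)"
    by (simp add: binomial_fact)
  then show "fact n * (fps_nth f l * fps_nth g (n - l))
      = of_nat (n choose l) * (fact l * fps_nth f l) * (fact (n - l) * fps_nth g (n - l))"
    by (simp add: field_simps)
qed

theorem theorem2:
  fixes k :: int and n :: nat and x :: real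
  shows "poly_bernoulli2 k n x =
    (\<Sum>l = 0..n. real (n choose l) *
       (\<Sum>p = 1..l+1. (-1) ^ (p + l + 1) / (real p powi k) * fact p
           * real (Stirling (l+1) p) / real (l+1))
       * bernoulli2 (n - l) x)"
proof -
  define L where "L = polylog_fps k oo (1 - fps_exp (-1))"
  define B where "B = fps_X / fps_ln 1 * fps_binomial x"
  have "fps_nth L 0 = 0"
    by (simp add: L_def polylog_fps_def)
  then have "L = fps_shift 1 L * fps_X"
    by (intro fps_ext) (simp add: mult.commute[of _ fps_X])
  moreover have "subdegree (fps_ln (1 :: real)) \<le> subdegree (fps_X :: real fps)"
    by (rule subdegree_leI) (simp add: fps_ln_nth)
  ultimately have gen: "L / fps_ln 1 * fps_binomial x = fps_shift 1 L * B"
    by (metis B_def fps_divide_times mult.assoc)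
  have "fact l * fps_nth (fps_shift 1 L) l
      = (\<Sum>p = 1..l+1. (-1) ^ (p + l + 1) / (real p powi k) * fact p
           * real (Stirling (l+1) p) / real (l+1))" for l
    unfolding fps_shift_nth L_def fps_nth_polylog_compose_one_minus_exp_neg sum_distrib_left
    by (intro sum.cong) (simp_all add: add.assoc)
  then show ?thesis
    unfolding poly_bernoulli2_def L_def[symmetric] gen fact_fps_mult_nth
    by (simp add: bernoulli2_def B_def)
qed

end
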